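(* Let $F(u,v)=F(u,v;t)=\sum_{p,q\ge1}f_{p,q}(t)u^pv^q$, where $f_{p,q}(t)=\sum_{n\ge1}t^n\,|\{e\in\mathbf{I}_n(201,210): e\text{ has parameters }(p,q)\}|$. Then $$F(u,v)=tuv+t\left(\frac{uF(u,v)-vF(v,v)}{1-v/u}+u^2v\left(\left.\frac{\partial F(u,v)}{\partial v}\right|_{v=1}-F(u,1)\right)\right).$$ Equivalently, writing $F(u,v)=\sum_{n\ge1}f_n(u,v)t^n$, we have $f_1(u,v)=uv$ and for $n\ge2$ $$f_n(u,v)=\frac{uf_{n-1}(u,v)-vf_{n-1}(v,v)}{1-v/u}+u^2v\left(\left.\frac{\partial f_{n-1}(u,v)}{\partial v}\right|_{v=1}-f_{n-1}(u,1)\right).$$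
   Context: $\mathbf{I}_n=\{(e_1,\dots,e_n)\in\mathbb{N}^n:0\le e_i<i\}$. $\mathbf{I}_n(201,210)$ is the set of $e\in\mathbf{I}_n$ with no indices $i<j<k$ such that $e_j<e_k<e_i$ and no indices $i<j<k$ such that $e_i>e_j>e_k$. The parameters of $e\in\mathbf{I}_n(201,210)$ are $(p,q)$ where $p=|\{k>e_n:(e_1,\dots,e_n,k)\in\mathbf{I}_{n+1}(201,210)\}|$ and $q=|\{k\le e_n:(e_1,\dots,e_n,k)\in\mathbf{I}_{n+1}(201,210)\}|$. *)

theory Defs
  imports "HOL-Analysis.Analysis"
begin

text \<open>Inversion sequences of length n, as lists e = [e_1,...,e_n] (0-indexed: e!i \<le> i,
  i.e. 0 \<le> e_(i+1) < i+1).\<close>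
definition inv_seq :: "nat \<Rightarrow> nat list set" where
  "inv_seq n = {e. length e = n \<and> (\<forall>i<n. e ! i < Suc i)}"

definition avoids_201_210 :: "nat list \<Rightarrow> bool" where
  "avoids_201_210 e \<longleftrightarrow>
     \<not> (\<exists>i j k. i < j \<and> j < k \<and> k < length e \<and> e!j < e!k \<and> e!k < e!i) \<and>
     \<not> (\<exists>i j k. i < j \<and> j < k \<and> k < length e \<and> e!i > e!j \<and> e!j > e!k)"

definition I201_210 :: "nat \<Rightarrow> nat list set" where
  "I201_210 n = {e \<in> inv_seq n. avoids_201_210 e}"

definition par_p :: "nat list \<Rightarrow> nat" where
  "par_p e = card {k. k > last e \<and> e @ [k] \<in> I201_210 (Suc (length e))}"

definition par_q :: "nat list \<Rightarrow> nat" where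
  "par_q e = card {k. k \<le> last e \<and> e @ [k] \<in> I201_210 (Suc (length e))}"

text \<open>f_n(u,v) = \<Sum>_{p,q\<ge>1} |{e \<in> I_n(201,210) with parameters (p,q)}| u^p v^q,
  written as a sum over the sequences themselves.\<close>
definition fn :: "nat \<Rightarrow> real \<Rightarrow> real \<Rightarrow> real" where
  "fn n u v = (\<Sum>e \<in> {e \<in> I201_210 n. par_p e \<ge> 1 \<and> par_q e \<ge> 1}. u ^ par_p e * v ^ par_q e)"

end

theory Submission
  imports Defs
begin

text \<open>Every e \<in> I_{n+1}(201,210) is uniquely e' @ [k] with e' \<in> I_n(201,210) and k an active
  site of e'. Let S be the active sites of e', so |S| = p + q. If k \<ge> last e', the child has
  the active sites S \<union> {n+1} and parameters (|S| + 1 - r, r), where r is the rank of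
  k in S; these weights sum to the geometric term (u F(u,v) - v F(v,v)) / (1 - v/u). If
  k < last e' (q - 1 choices), then last e' is the maximum of e' and the child has parameters
  (p + 2, 1); the factor q - 1 is obtained by differentiating in v at v = 1.\<close>

lemma sum_rank_ge:
  fixes S :: "'a::linorder set" and f :: "nat \<Rightarrow> 'b::comm_monoid_add"
  assumes "finite S" and "a \<in> S"
  shows "(\<Sum>k\<in>{k\<in>S. a \<le> k}. f (card {x\<in>S. x \<le> k})) = (\<Sum>j=card {x\<in>S. x \<le> a}..card S. f j)"
proof -
  define rank where "rank k = card {x\<in>S. x \<le> k}" for k
  have rank_less: "rank k < rank k'" if "k' \<in> S" "k < k'" for k k'
  proof -
    have "k' \<in> {x\<in>S. x \<le> k'} - {x\<in>S. x \<le> k}" using that by auto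
    then have "{x\<in>S. x \<le> k} \<subset> {x\<in>S. x \<le> k'}" using that by auto
    then show ?thesis unfolding rank_def using assms(1) by (intro psubset_card_mono) auto
  qed
  have inj: "inj_on rank {k\<in>S. a \<le> k}"
  proof (rule inj_onI)
    fix k k' assume "k \<in> {k\<in>S. a \<le> k}" "k' \<in> {k\<in>S. a \<le> k}" "rank k = rank k'"
    then show "k = k'"
      using rank_less[of k k'] rank_less[of k' k] by (cases k k' rule: linorder_cases) auto
  qed
  have "rank ` {k\<in>S. a \<le> k} \<subseteq> {rank a..card S}"
    unfolding rank_def using assms(1) by (auto intro!: card_mono)
  moreover have "card {k\<in>S. a \<le> k} + card {x\<in>S. x < a} = card S"
    using assms(1) by (subst card_Un_disjoint[symmetric]) (auto intro: arg_cong[where f=card])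
  moreover have "rank a = Suc (card {x\<in>S. x < a})"
  proof -
    have "{x\<in>S. x \<le> a} = insert a {x\<in>S. x < a}" using assms(2) by auto
    then show ?thesis unfolding rank_def using assms(1) by simp
  qed
  ultimately have "rank ` {k\<in>S. a \<le> k} = {rank a..card S}"
    using card_image[OF inj] by (intro card_subset_eq) auto
  then show ?thesis
    using sum.reindex[OF inj, of f] unfolding rank_def by simp
qed

lemma geometric_sum_ivl_mult:
  fixes u v :: "'a::comm_ring_1"
  shows "(u - v) * (\<Sum>j=Q..P+Q. u^(P+Q+1-j) * v^j) = u * v^Q * (u^Suc P - v^Suc P)"
proof -
  have "(u - v) * (\<Sum>i<Suc P. v^i * u^(P - i)) = - ((v - u) * (\<Sum>i<Suc P. v^i * u^(P - i)))"
    by (simp add: algebra_simps)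
  also have "\<dots> = u^Suc P - v^Suc P"
    unfolding diff_power_eq_sum[symmetric] by simp
  finally have geometric: "(u - v) * (\<Sum>i<Suc P. v^i * u^(P - i)) = u^Suc P - v^Suc P" .
  have "(\<Sum>j=Q..P+Q. u^(P+Q+1-j) * v^j) = (\<Sum>i=0..P. u^(P+1-i) * v^(i+Q))"
    using sum.shift_bounds_cl_nat_ivl[of "\<lambda>j. u^(P+Q+1-j) * v^j" 0 Q P] by simp
  also have "\<dots> = u * v^Q * (\<Sum>i<Suc P. v^i * u^(P - i))"
    by (simp del: sum.lessThan_Suc
        add: sum_distrib_left atLeast0AtMost lessThan_Suc_atMost Suc_diff_le power_add algebra_simps)
  finally have "(u - v) * (\<Sum>j=Q..P+Q. u^(P+Q+1-j) * v^j) = u * v^Q * ((u - v) * (\<Sum>i<Suc P. v^i * u^(P - i)))"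
    by (simp only: ac_simps)
  then show ?thesis
    unfolding geometric .
qed

lemma geometric_sum_ivl:
  fixes u v :: "'a::field"
  assumes "u \<noteq> 0" and "u \<noteq> v"
  shows "(\<Sum>j=Q..P+Q. u^(P+Q+1-j) * v^j) = (u * (u^P * v^Q) - v * (v^P * v^Q)) / (1 - v / u)"
proof -
  have "u - v \<noteq> 0" using assms(2) by simp
  have "1 - v / u = (u - v) / u"
    using assms(1) by (simp add: diff_divide_distrib)
  then have "(u * (u^P * v^Q) - v * (v^P * v^Q)) / (1 - v / u) =
      (u * (u^P * v^Q) - v * (v^P * v^Q)) * u / (u - v)"
    by simp
  also have "\<dots> = u * v^Q * (u^Suc P - v^Suc P) / (u - v)"
    by (simp add: algebra_simps)
  also have "\<dots> = (\<Sum>j=Q..P+Q. u^(P+Q+1-j) * v^j)"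
    using geometric_sum_ivl_mult[where u=u and v=v and P=P and Q=Q] \<open>u - v \<noteq> 0\<close>
    by (metis nonzero_mult_div_cancel_left)
  finally show ?thesis ..
qed

text \<open>Both 201 and 210 begin with a descent e_i > e_j; the letters completing one of them after
  it are exactly the k violating this condition.\<close>

definition descent_compatible :: "nat list \<Rightarrow> nat \<Rightarrow> bool" where
  "descent_compatible e k \<longleftrightarrow> (\<forall>j<length e. \<forall>i<j. e!j < e!i \<longrightarrow> e!i \<le> k \<or> k = e!j)"

lemma avoids_201_210_iff:
  "avoids_201_210 e \<longleftrightarrow> (\<forall>k<length e. descent_compatible (take k e) (e!k))"
proof -
  have pattern: "(e!j < e!k \<and> e!k < e!i \<or> e!i > e!j \<and> e!j > e!k) \<longleftrightarrow>
      \<not> (e!j < e!i \<longrightarrow> e!i \<le> e!k \<or> e!k = e!j)" for i j k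
    by auto
  have "avoids_201_210 e \<longleftrightarrow>
      \<not> (\<exists>i j k. i < j \<and> j < k \<and> k < length e \<and>
           (e!j < e!k \<and> e!k < e!i \<or> e!i > e!j \<and> e!j > e!k))"
    unfolding avoids_201_210_def by blast
  also have "\<dots> \<longleftrightarrow> (\<forall>k<length e. \<forall>j<k. \<forall>i<j. e!j < e!i \<longrightarrow> e!i \<le> e!k \<or> e!k = e!j)"
    unfolding pattern by blast
  also have "\<dots> \<longleftrightarrow> (\<forall>k<length e. descent_compatible (take k e) (e!k))"
    by (simp add: descent_compatible_def)
  finally show ?thesis .
qed

lemma avoids_201_210_snoc:
  "avoids_201_210 (e @ [k]) \<longleftrightarrow> avoids_201_210 e \<and> descent_compatible e k"
  unfolding avoids_201_210_iff by (auto simp: All_less_Suc nth_append)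

lemma descent_compatible_snoc:
  "descent_compatible (e @ [k]) x \<longleftrightarrow>
     descent_compatible e x \<and> (\<forall>i<length e. k < e!i \<longrightarrow> e!i \<le> x \<or> x = k)"
  unfolding descent_compatible_def by (auto simp: All_less_Suc nth_append)

definition active_sites :: "nat list \<Rightarrow> nat set" where
  "active_sites e = {k. e @ [k] \<in> I201_210 (Suc (length e))}"

lemma I201_210_length: "e \<in> I201_210 n \<Longrightarrow> length e = n"
  by (simp add: I201_210_def inv_seq_def)

lemma I201_210_nth_le: "e \<in> I201_210 n \<Longrightarrow> i < n \<Longrightarrow> e!i \<le> i"
  by (simp add: I201_210_def inv_seq_def less_Suc_eq_le)

lemma finite_I201_210: "finite (I201_210 n)"
proof (rule finite_subset)
  show "I201_210 n \<subseteq> {xs. set xs \<subseteq> {..n} \<and> length xs = n}"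
  proof (rule subsetI, intro CollectI conjI)
    fix e assume e: "e \<in> I201_210 n"
    have "e!i \<le> n" if "i < n" for i
      using I201_210_nth_le[OF e that] that by simp
    then show "set e \<subseteq> {..n}" and "length e = n"
      by (auto simp: in_set_conv_nth I201_210_length[OF e])
  qed
  show "finite {xs. set xs \<subseteq> {..n} \<and> length xs = n}"
    by (rule finite_lists_length_eq) simp
qed

lemma snoc_in_I201_210_iff:
  "e @ [k] \<in> I201_210 (Suc n) \<longleftrightarrow> e \<in> I201_210 n \<and> k \<le> n \<and> descent_compatible e k"
  unfolding I201_210_def inv_seq_def
  by (auto simp: avoids_201_210_snoc All_less_Suc nth_append)

lemma last_less:
  assumes "e \<in> I201_210 n" and "e \<noteq> []"
  shows "last e < n"
proof -
  have "n - 1 < n" and "last e = e!(n - 1)"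
    using assms I201_210_length[OF assms(1)] by (auto simp: last_conv_nth)
  then show ?thesis using I201_210_nth_le[OF assms(1)] by fastforce
qed

lemma descent_compatible_ge:
  assumes "e \<in> I201_210 n" and "n \<le> k"
  shows "descent_compatible e k"
proof -
  have "e!i \<le> k" if "i < n" for i
    using I201_210_nth_le[OF assms(1) that] that assms(2) by linarith
  then show ?thesis
    unfolding descent_compatible_def using I201_210_length[OF assms(1)] by auto
qed

lemma descent_compatible_last:
  "avoids_201_210 e \<Longrightarrow> e \<noteq> [] \<Longrightarrow> descent_compatible e (last e)"
  by (cases e rule: rev_exhaust) (simp_all add: avoids_201_210_snoc descent_compatible_snoc)

lemma descent_compatible_above_last:
  assumes "descent_compatible e k" and "e \<noteq> []" and "i < length e" and "last e < e!i"
  shows "e!i \<le> k \<or> k = last e"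
proof -
  have "i \<noteq> length e - 1"
    using assms(2,4) by (auto simp: last_conv_nth)
  then have "i < length e - 1"
    using assms(3) by linarith
  then show ?thesis
    using assms unfolding descent_compatible_def by (simp add: last_conv_nth)
qed

lemma active_sites_eq:
  "e \<in> I201_210 n \<Longrightarrow> active_sites e = {k. k \<le> n \<and> descent_compatible e k}"
  by (auto simp: active_sites_def snoc_in_I201_210_iff I201_210_length)

lemma finite_active_sites: "finite (active_sites e)"
  by (rule finite_subset[of _ "{..length e}"]) (auto simp: active_sites_def snoc_in_I201_210_iff)

lemma length_in_active_sites: "e \<in> I201_210 n \<Longrightarrow> n \<in> active_sites e"
  by (simp add: active_sites_eq descent_compatible_ge)

lemma last_in_active_sites:
  assumes "e \<in> I201_210 n" and "e \<noteq> []"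
  shows "last e \<in> active_sites e"
proof -
  have "avoids_201_210 e" using assms(1) by (simp add: I201_210_def)
  then show ?thesis
    using last_less[OF assms] descent_compatible_last[OF _ assms(2)]
    by (simp add: active_sites_eq[OF assms(1)])
qed

lemma active_sites_snoc_ge:
  assumes e: "e \<in> I201_210 n" "e \<noteq> []" and k: "k \<in> active_sites e" "last e \<le> k"
  shows "active_sites (e @ [k]) = insert (Suc n) (active_sites e)"
proof -
  have compatible: "descent_compatible (e @ [k]) x \<longleftrightarrow> descent_compatible e x" for x
  proof -
    have "e!i \<le> x \<or> x = k" if "descent_compatible e x" "i < length e" "k < e!i" for i
    proof -
      have "k = last e"
        using descent_compatible_above_last[of e k i] k e that by (auto simp: active_sites_eq)
      then show ?thesis using descent_compatible_above_last[of e x i] that e by auto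
    qed
    then show ?thesis by (auto simp: descent_compatible_snoc)
  qed
  have "e @ [k] \<in> I201_210 (Suc n)"
    using k e by (simp add: active_sites_eq snoc_in_I201_210_iff)
  then show ?thesis
    using e by (auto simp: active_sites_eq compatible le_Suc_eq descent_compatible_ge)
qed

lemma active_sites_snoc_lt:
  assumes e: "e \<in> I201_210 n" "e \<noteq> []" and k: "k \<in> active_sites e" "k < last e"
  shows "active_sites (e @ [k]) = insert k (insert (Suc n) {x \<in> active_sites e. last e \<le> x})"
proof -
  have k_compatible: "descent_compatible e k" and "k \<le> n"
    using k e by (auto simp: active_sites_eq)
  have last_max: "e!i \<le> last e" if "i < length e" for i
    using descent_compatible_above_last[OF k_compatible e(2) that] k(2) by linarith
  have "(\<forall>i<length e. k < e!i \<longrightarrow> e!i \<le> x \<or> x = k) \<longleftrightarrow> last e \<le> x \<or> x = k" for x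
  proof
    assume "\<forall>i<length e. k < e!i \<longrightarrow> e!i \<le> x \<or> x = k"
    then show "last e \<le> x \<or> x = k"
      using k(2) e(2) by (simp add: last_conv_nth)
  qed (use last_max in \<open>auto intro: le_trans\<close>)
  then have compatible:
    "descent_compatible (e @ [k]) x \<longleftrightarrow> descent_compatible e x \<and> (last e \<le> x \<or> x = k)" for x
    by (simp add: descent_compatible_snoc)
  have "e @ [k] \<in> I201_210 (Suc n)"
    using k e by (simp add: active_sites_eq snoc_in_I201_210_iff)
  then show ?thesis
    using e k_compatible \<open>k \<le> n\<close> last_less[OF e]
    by (auto simp: active_sites_eq compatible le_Suc_eq descent_compatible_ge)
qed

lemma par_p_eq: "par_p e = card {k \<in> active_sites e. last e < k}"
  unfolding par_p_def active_sites_def by (rule arg_cong[where f=card]) auto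

lemma par_q_eq: "par_q e = card {k \<in> active_sites e. k \<le> last e}"
  unfolding par_q_def active_sites_def by (rule arg_cong[where f=card]) auto

lemma par_p_add_par_q: "par_p e + par_q e = card (active_sites e)"
  unfolding par_p_eq par_q_eq using finite_active_sites
  by (subst card_Un_disjoint[symmetric]) (auto intro: arg_cong[where f=card])

lemma par_p_pos:
  assumes "e \<in> I201_210 n" and "e \<noteq> []"
  shows "0 < par_p e"
proof -
  have "n \<in> {k \<in> active_sites e. last e < k}"
    using length_in_active_sites[OF assms(1)] last_less[OF assms] by simp
  then show ?thesis unfolding par_p_eq using finite_active_sites by (auto simp: card_gt_0_iff)
qed

lemma par_q_pos:
  assumes "e \<in> I201_210 n" and "e \<noteq> []"
  shows "0 < par_q e"
proof -
  have "last e \<in> {k \<in> active_sites e. k \<le> last e}"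
    using last_in_active_sites[OF assms] by simp
  then show ?thesis unfolding par_q_eq using finite_active_sites by (auto simp: card_gt_0_iff)
qed

lemma par_snoc_ge:
  assumes e: "e \<in> I201_210 n" "e \<noteq> []" and k: "k \<in> active_sites e" "last e \<le> k"
  shows "par_q (e @ [k]) = card {x \<in> active_sites e. x \<le> k}"
    and "par_p (e @ [k]) = Suc (card (active_sites e)) - card {x \<in> active_sites e. x \<le> k}"
proof -
  have sites: "active_sites (e @ [k]) = insert (Suc n) (active_sites e)"
    using active_sites_snoc_ge[OF e k] .
  have "k \<le> n" and new: "Suc n \<notin> active_sites e"
    using e k by (auto simp: active_sites_eq)
  then show q: "par_q (e @ [k]) = card {x \<in> active_sites e. x \<le> k}"
    unfolding par_q_eq sites by (auto intro: arg_cong[where f=card])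
  have "card (active_sites (e @ [k])) = Suc (card (active_sites e))"
    unfolding sites using new finite_active_sites by simp
  then show "par_p (e @ [k]) = Suc (card (active_sites e)) - card {x \<in> active_sites e. x \<le> k}"
    using par_p_add_par_q[of "e @ [k]"] q by simp
qed

lemma par_snoc_lt:
  assumes e: "e \<in> I201_210 n" "e \<noteq> []" and k: "k \<in> active_sites e" "k < last e"
  shows "par_q (e @ [k]) = 1" and "par_p (e @ [k]) = par_p e + 2"
proof -
  have sites: "active_sites (e @ [k]) = insert k (insert (Suc n) {x \<in> active_sites e. last e \<le> x})"
    using active_sites_snoc_lt[OF e k] .
  have "k \<le> n" and new: "Suc n \<notin> active_sites e"
    using e k by (auto simp: active_sites_eq)
  have "{x \<in> active_sites (e @ [k]). x \<le> k} = {k}"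
    unfolding sites using \<open>k \<le> n\<close> k(2) by auto
  then show "par_q (e @ [k]) = 1"
    unfolding par_q_eq by simp
  have "{x \<in> active_sites (e @ [k]). k < x} =
      insert (Suc n) (insert (last e) {x \<in> active_sites e. last e < x})"
    unfolding sites using last_in_active_sites[OF e] \<open>k \<le> n\<close> k(2) by auto
  then show "par_p (e @ [k]) = par_p e + 2"
    unfolding par_p_eq using new last_less[OF e] finite_active_sites by simp
qed

lemma I201_210_Suc:
  "I201_210 (Suc n) = (\<lambda>(e, k). e @ [k]) ` (SIGMA e:I201_210 n. active_sites e)"
proof (intro set_eqI iffI)
  fix x assume x: "x \<in> I201_210 (Suc n)"
  then have "x \<noteq> []" by (auto dest: I201_210_length)
  then obtain e k where "x = e @ [k]" by (cases x rule: rev_exhaust) auto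
  with x show "x \<in> (\<lambda>(e, k). e @ [k]) ` (SIGMA e:I201_210 n. active_sites e)"
    by (auto simp: active_sites_eq snoc_in_I201_210_iff)
qed (auto simp: active_sites_eq snoc_in_I201_210_iff)

lemma fn_eq_sum:
  assumes "0 < n"
  shows "fn n u v = (\<Sum>e\<in>I201_210 n. u ^ par_p e * v ^ par_q e)"
proof -
  have "e \<noteq> []" if "e \<in> I201_210 n" for e
    using I201_210_length[OF that] assms by auto
  then have "{e \<in> I201_210 n. par_p e \<ge> 1 \<and> par_q e \<ge> 1} = I201_210 n"
    by (auto simp: Suc_le_eq intro: par_p_pos par_q_pos)
  then show ?thesis unfolding fn_def by simp
qed

lemma fn_Suc_eq_sum:
  assumes "0 < n"
  shows "fn (Suc n) u v =
    (\<Sum>e\<in>I201_210 n. \<Sum>k\<in>active_sites e. u ^ par_p (e @ [k]) * v ^ par_q (e @ [k]))"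
proof -
  have "inj_on (\<lambda>(e, k). e @ [k]) (SIGMA e:I201_210 n. active_sites e)"
    by (rule inj_onI) auto
  then have "fn (Suc n) u v =
      (\<Sum>(e, k)\<in>(SIGMA e:I201_210 n. active_sites e). u ^ par_p (e @ [k]) * v ^ par_q (e @ [k]))"
    unfolding fn_eq_sum[OF zero_less_Suc] I201_210_Suc by (simp add: sum.reindex case_prod_unfold)
  also have "\<dots> = (\<Sum>e\<in>I201_210 n. \<Sum>k\<in>active_sites e. u ^ par_p (e @ [k]) * v ^ par_q (e @ [k]))"
    by (rule sum.Sigma[symmetric]) (auto simp: finite_I201_210 finite_active_sites)
  finally show ?thesis .
qed

lemma deriv_fn:
  "deriv (\<lambda>w. fn n u w) 1 = (\<Sum>e\<in>I201_210 n. u ^ par_p e * real (par_q e))" if "0 < n"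
proof -
  have "((\<lambda>w. fn n u w) has_real_derivative (\<Sum>e\<in>I201_210 n. u ^ par_p e * real (par_q e))) (at 1)"
    unfolding fn_eq_sum[OF that]
    by (intro DERIV_sum DERIV_cmult) (metis DERIV_pow mult.right_neutral power_one)
  then show ?thesis by (rule DERIV_imp_deriv)
qed

lemma sum_weights_snoc:
  fixes u v :: real
  assumes e: "e \<in> I201_210 n" "e \<noteq> []" and "u \<noteq> 0" and "u \<noteq> v"
  shows "(\<Sum>k\<in>active_sites e. u ^ par_p (e @ [k]) * v ^ par_q (e @ [k])) =
    (u * (u ^ par_p e * v ^ par_q e) - v * (v ^ par_p e * v ^ par_q e)) / (1 - v / u)
    + u^2 * v * (real (par_q e) * u ^ par_p e - u ^ par_p e)"
proof -
  define S a P Q where "S = active_sites e" and "a = last e" and "P = par_p e" and "Q = par_q e"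
  define weight where "weight k = u ^ par_p (e @ [k]) * v ^ par_q (e @ [k])" for k
  have "finite S" and "a \<in> S"
    unfolding S_def a_def using finite_active_sites last_in_active_sites[OF e] by simp_all
  have Q_eq: "Q = card {k\<in>S. k \<le> a}"
    unfolding Q_def S_def a_def by (rule par_q_eq)
  have card_S: "card S = P + Q"
    unfolding Q_def P_def S_def by (rule par_p_add_par_q[symmetric])
  have "{k\<in>S. k \<le> a} = insert a {k\<in>S. k < a}"
    using \<open>a \<in> S\<close> by auto
  then have card_low: "card {k\<in>S. k < a} = Q - 1"
    unfolding Q_eq using \<open>finite S\<close> by simp
  have "(\<Sum>k\<in>{k\<in>S. k < a}. weight k) = (\<Sum>k\<in>{k\<in>S. k < a}. u^(P+2) * v)"
    unfolding weight_def S_def a_def P_def using par_snoc_lt[OF e] by simp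
  then have low: "(\<Sum>k\<in>{k\<in>S. k < a}. weight k) = real (Q - 1) * (u^(P+2) * v)"
    using card_low by simp
  have "(\<Sum>k\<in>{k\<in>S. a \<le> k}. weight k) =
      (\<Sum>k\<in>{k\<in>S. a \<le> k}. u^(Suc (card S) - card {x\<in>S. x \<le> k}) * v^card {x\<in>S. x \<le> k})"
    unfolding weight_def S_def a_def using par_snoc_ge[OF e] by simp
  also have "\<dots> = (\<Sum>j=card {x\<in>S. x \<le> a}..card S. u^(Suc (card S) - j) * v^j)"
    by (rule sum_rank_ge[OF \<open>finite S\<close> \<open>a \<in> S\<close>])
  also have "\<dots> = (\<Sum>j=Q..P+Q. u^(P+Q+1-j) * v^j)"
    unfolding Q_eq[symmetric] card_S by simp
  finally have high: "(\<Sum>k\<in>{k\<in>S. a \<le> k}. weight k) =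
      (u * (u^P * v^Q) - v * (v^P * v^Q)) / (1 - v / u)"
    unfolding geometric_sum_ivl[OF assms(3,4)] .
  have "(\<Sum>k\<in>S. weight k) = (\<Sum>k\<in>{k\<in>S. k < a} \<union> {k\<in>S. a \<le> k}. weight k)"
    by (rule sum.cong) auto
  also have "\<dots> = (\<Sum>k\<in>{k\<in>S. k < a}. weight k) + (\<Sum>k\<in>{k\<in>S. a \<le> k}. weight k)"
    using \<open>finite S\<close> by (intro sum.union_disjoint) auto
  also have "\<dots> =
      (u * (u^P * v^Q) - v * (v^P * v^Q)) / (1 - v / u) + u^2 * v * (real Q * u^P - u^P)"
    unfolding low high using par_q_pos[OF e]
    by (simp add: Q_def of_nat_diff power2_eq_square algebra_simps)
  finally have "(\<Sum>k\<in>S. weight k) =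
      (u * (u^P * v^Q) - v * (v^P * v^Q)) / (1 - v / u) + u^2 * v * (real Q * u^P - u^P)" .
  then show ?thesis
    unfolding weight_def S_def P_def Q_def .
qed

lemma I201_210_0: "I201_210 0 = {[]}"
  by (auto simp: I201_210_def inv_seq_def avoids_201_210_def)

lemma fn_1: "fn 1 u v = u * v"
proof -
  have "active_sites [] = {0}"
    using I201_210_0 by (auto simp: active_sites_eq[of "[]" 0] descent_compatible_def)
  then have "(SIGMA e:I201_210 0. active_sites e) = {([], 0)}"
    unfolding I201_210_0 by auto
  then have I1: "I201_210 1 = {[0]}"
    using I201_210_Suc[of 0] by simp
  then have "active_sites [0] = {k. k \<le> 1 \<and> descent_compatible [0] k}"
    by (intro active_sites_eq) simp
  also have "\<dots> = {0, 1}"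
    by (auto simp: descent_compatible_def le_Suc_eq)
  finally have sites: "active_sites [0] = {0, 1}" .
  have "{k \<in> {0, 1}. 0 < k} = {1::nat}" and "{k \<in> {0, 1}. k \<le> 0} = {0::nat}"
    by auto
  then have "par_p [0] = 1" and "par_q [0] = 1"
    unfolding par_p_eq par_q_eq sites by simp_all
  then show ?thesis
    using fn_eq_sum[of 1] I1 by simp
qed

theorem proposition4p6:
  shows "(\<forall>u v. fn 1 u v = u * v) \<and>
    (\<forall>n \<ge> 2. \<forall>u v :: real. u \<noteq> 0 \<longrightarrow> u \<noteq> v \<longrightarrow>
       fn n u v = (u * fn (n - 1) u v - v * fn (n - 1) v v) / (1 - v / u)
                  + u ^ 2 * v * (deriv (\<lambda>w. fn (n - 1) u w) 1 - fn (n - 1) u 1))"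
proof (intro conjI allI impI)
  show "fn 1 u v = u * v" for u v by (rule fn_1)
next
  fix n :: nat and u v :: real
  assume "2 \<le> n" and "u \<noteq> 0" and "u \<noteq> v"
  then obtain m where n: "n = Suc m" and "0 < m"
    by (cases n) auto
  have "e \<noteq> []" if "e \<in> I201_210 m" for e
    using I201_210_length[OF that] \<open>0 < m\<close> by auto
  then have "fn n u v = (\<Sum>e\<in>I201_210 m.
      (u * (u ^ par_p e * v ^ par_q e) - v * (v ^ par_p e * v ^ par_q e)) / (1 - v / u)
      + u^2 * v * (real (par_q e) * u ^ par_p e - u ^ par_p e))"
    unfolding n fn_Suc_eq_sum[OF \<open>0 < m\<close>]
    using sum_weights_snoc \<open>u \<noteq> 0\<close> \<open>u \<noteq> v\<close> by (intro sum.cong) auto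
  also have "\<dots> = (u * fn m u v - v * fn m v v) / (1 - v / u)
      + u^2 * v * (deriv (\<lambda>w. fn m u w) 1 - fn m u 1)"
    unfolding deriv_fn[OF \<open>0 < m\<close>] unfolding fn_eq_sum[OF \<open>0 < m\<close>]
    by (simp add: sum_subtractf sum.distrib sum_divide_distrib sum_distrib_left algebra_simps)
      (simp add: sum_divide_distrib[symmetric] sum_subtractf)
  finally show "fn n u v = (u * fn (n - 1) u v - v * fn (n - 1) v v) / (1 - v / u)
      + u ^ 2 * v * (deriv (\<lambda>w. fn (n - 1) u w) 1 - fn (n - 1) u 1)"
    unfolding n by simp
qed

end
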